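(* The graphs $W^{k-1}_{k-i+1}= W(k-1,k-2,\dots,k-i+1)$ satisfy: (1) $W^{k-1}_{k-i+1}$ can be properly $(k-1)$-colored so that at most $i$ different colors appear at active vertices and so that among active vertices, only one vertex of our choosing gets the $i$th color. (2) In any $(k-1)$-coloring of $W^{k-1}_{k-i+1}$, at least $i$ different colors occur as the colors of active vertices. (3) If any edge from $W^{k-1}_{k-i+1}$ is removed, it can be properly $(k-1)$-colored so that at most $i-1$ colors occur at active vertices.
   Context: Fix $k\geq 4$ and a $(k-1)$-critical graph $M_{k-1}$ containing no triangles and no pentagons. Form $\bar M_{k-1}$ by adding, for each vertex $v$ of $M_{k-1}$, a new vertex $\bar v$ joined to every vertex of the neighborhood $\Gamma(v)\subseteq M_{k-1}$; the edges of $M_{k-1}$ are Type 1 edges, the newly added edges are Type 2 edges, and the new vertices $\bar v$ are the forward vertices (they form an independent set). For $2\leq r\leq k-1$, the graph $M^r_{k-1}\subseteq \bar M_{k-1}$ is obtained by removing Type 2 edges one by one (discarding any forward vertices isolated by this process) until no further Type 2 edge can be removed without the result admitting a $(k-1)$-coloring in which only $r-1$ colors appear at forward vertices. Denote by $F(M)$ the set of forward vertices of such a graph $M$. Given $r_1,\dots,r_t$, the graph $W(r_1,\dots,r_t)$ is the disjoint union of graphs $M^{r_i}_{k-1}$, $1\leq i\leq t$, together with an independent "active set" $A=\prod_i F(M^{r_i}_{k-1})$, where for each $i$ every forward vertex $\bar v\in F(M^{r_i}_{k-1})$ is joined to all vertices $u\in A$ whose $i$th coordinate equals $\bar v$. Set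 $W^{k-1}_{k-i+1}= W(k-1,k-2,\dots,k-i+1)$ (for $i=1$ this is interpreted as a single active vertex). *)

theory Defs
  imports Main
begin

definition graph :: "'v set \<Rightarrow> 'v set set \<Rightarrow> bool" where
  "graph V E \<longleftrightarrow> finite V \<and> (\<forall>e\<in>E. e \<subseteq> V \<and> card e = 2)"

definition proper_col :: "'v set \<Rightarrow> 'v set set \<Rightarrow> nat \<Rightarrow> ('v \<Rightarrow> nat) \<Rightarrow> bool" where
  "proper_col V E n c \<longleftrightarrow> (\<forall>v\<in>V. c v < n) \<and> (\<forall>u v. {u, v} \<in> E \<longrightarrow> c u \<noteq> c v)"

definition colorable :: "'v set \<Rightarrow> 'v set set \<Rightarrow> nat \<Rightarrow> bool" where
  "colorable V E n \<longleftrightarrow> (\<exists>c. proper_col V E n c)"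

definition critical :: "'v set \<Rightarrow> 'v set set \<Rightarrow> nat \<Rightarrow> bool" where
  "critical V E n \<longleftrightarrow> graph V E \<and> colorable V E n \<and> \<not> colorable V E (n - 1) \<and>
     (\<forall>V' E'. V' \<subseteq> V \<and> E' \<subseteq> E \<and> (\<forall>e\<in>E'. e \<subseteq> V') \<and> (V', E') \<noteq> (V, E)
        \<longrightarrow> colorable V' E' (n - 1))"

definition triangle_free :: "'v set set \<Rightarrow> bool" where
  "triangle_free E \<longleftrightarrow> \<not> (\<exists>a b c. {a, b} \<in> E \<and> {b, c} \<in> E \<and> {a, c} \<in> E)"

definition pentagon_free :: "'v set set \<Rightarrow> bool" where
  "pentagon_free E \<longleftrightarrow> \<not> (\<exists>a b c d e. distinct [a, b, c, d, e] \<and>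
     {a, b} \<in> E \<and> {b, c} \<in> E \<and> {c, d} \<in> E \<and> {d, e} \<in> E \<and> {e, a} \<in> E)"

text \<open>Vertices of \<open>\<bar>M\<close>: Inl v (original vertex v), Inr v (forward vertex \<open>\<bar>v\<close>).\<close>

definition type1_edges :: "'a set set \<Rightarrow> ('a + 'a) set set" where
  "type1_edges E = (\<lambda>e. Inl ` e) ` E"

definition type2_edges :: "'a set \<Rightarrow> 'a set set \<Rightarrow> ('a + 'a) set set" where
  "type2_edges V E = {{Inr v, Inl u} | u v. v \<in> V \<and> {u, v} \<in> E}"

text \<open>Subgraph of \<open>\<bar>M\<close> keeping all Type 1 edges and the Type 2 edges in S;
  forward vertices isolated by the removal are discarded.\<close>
definition fwd :: "('a + 'a) set set \<Rightarrow> 'a set" where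
  "fwd S = {v. \<exists>u. {Inr v, Inl u} \<in> S}"

definition sub_verts :: "'a set \<Rightarrow> ('a + 'a) set set \<Rightarrow> ('a + 'a) set" where
  "sub_verts V S = Inl ` V \<union> Inr ` fwd S"

definition sub_edges :: "'a set set \<Rightarrow> ('a + 'a) set set \<Rightarrow> ('a + 'a) set set" where
  "sub_edges E S = type1_edges E \<union> S"

definition admits :: "'a set \<Rightarrow> 'a set set \<Rightarrow> nat \<Rightarrow> nat \<Rightarrow> ('a + 'a) set set \<Rightarrow> bool" where
  "admits V E n r S \<longleftrightarrow> (\<exists>c. proper_col (sub_verts V S) (sub_edges E S) n c \<and>
      card (c ` Inr ` fwd S) \<le> r - 1)"

definition removal_step :: "'a set \<Rightarrow> 'a set set \<Rightarrow> nat \<Rightarrow> nat \<Rightarrow>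
     ('a + 'a) set set \<Rightarrow> ('a + 'a) set set \<Rightarrow> bool" where
  "removal_step V E n r S S' \<longleftrightarrow> (\<exists>e\<in>S. S' = S - {e} \<and> \<not> admits V E n r S')"

text \<open>S is (the Type 2 edge set of) a possible outcome \<open>M^r_n\<close> of the process (with n = k-1).\<close>
definition is_Mr :: "'a set \<Rightarrow> 'a set set \<Rightarrow> nat \<Rightarrow> nat \<Rightarrow> ('a + 'a) set set \<Rightarrow> bool" where
  "is_Mr V E n r S \<longleftrightarrow> (removal_step V E n r)\<^sup>*\<^sup>* (type2_edges V E) S \<and>
     (\<forall>e\<in>S. admits V E n r (S - {e}))"

text \<open>Component j (j < t) is the subgraph given by Ss j. Active vertices are lists xs of
  length t with xs!j a forward vertex of component j.\<close>
definition active :: "nat \<Rightarrow> (nat \<Rightarrow> ('a + 'a) set set) \<Rightarrow> 'a list set" where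
  "active t Ss = {xs. length xs = t \<and> (\<forall>j<t. xs ! j \<in> fwd (Ss j))}"

definition W_verts :: "'a set \<Rightarrow> nat \<Rightarrow> (nat \<Rightarrow> ('a + 'a) set set)
     \<Rightarrow> ((nat \<times> ('a + 'a)) + 'a list) set" where
  "W_verts V t Ss = {Inl (j, x) | j x. j < t \<and> x \<in> sub_verts V (Ss j)} \<union> Inr ` active t Ss"

definition W_edges :: "'a set set \<Rightarrow> nat \<Rightarrow> (nat \<Rightarrow> ('a + 'a) set set)
     \<Rightarrow> ((nat \<times> ('a + 'a)) + 'a list) set set" where
  "W_edges E t Ss = {(\<lambda>x. Inl (j, x)) ` e | j e. j < t \<and> e \<in> sub_edges E (Ss j)} \<union>
     {{Inl (j, Inr (xs ! j)), Inr xs} | j xs. j < t \<and> xs \<in> active t Ss}"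

end

theory Submission
  imports Defs "HOL-Combinatorics.Permutations"
begin

text \<open>
  Write \<open>n = k - 1\<close> and \<open>t = i - 1\<close>; component \<open>j < t\<close> is \<open>M^(n-j)\<close>. Its forward vertices need at
  least \<open>n - j\<close> colours, but by the minimality of the removal process, after deleting a Type 2
  edge (and, by criticality, a Type 1 edge) \<open>n - j - 1\<close> suffice. Permuting colours, component
  \<open>j\<close> can therefore be coloured with colour \<open>j\<close> at one prescribed forward vertex \<open>a_j\<close> and colours
  above \<open>j\<close> at all others. Colouring each active vertex \<open>x\<close> by the least \<open>l\<close> with \<open>x_l \<noteq> a_l\<close>,
  and \<open>a\<close> itself by \<open>t\<close>, gives (1). Deleting an edge inside component \<open>j\<close> lets all its forward
  vertices avoid colour \<open>j\<close>, and deleting the edge from \<open>a\<close> to component \<open>j\<close> lets \<open>a\<close> take colour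
  \<open>j\<close>; either way colour \<open>t\<close> disappears, which gives (3).
  For (2), if the active vertices used only \<open>m \<le> t\<close> colours, then, since component \<open>l\<close> misses
  at most \<open>l\<close> colours on its forward vertices, the active colours can be matched greedily with
  components \<open>l < m\<close>, yielding an active vertex adjacent to a vertex of its own colour.
\<close>

section \<open>Colourings\<close>

lemma proper_col_antimono: "proper_col V E n c \<Longrightarrow> E' \<subseteq> E \<Longrightarrow> proper_col V E' n c"
  by (auto simp: proper_col_def)

lemma proper_colD: "proper_col V E n c \<Longrightarrow> {u, v} \<in> E \<Longrightarrow> c u \<noteq> c v"
  by (simp add: proper_col_def)

lemma proper_col_fun_upd:
  assumes "proper_col V E n c" "d < n" "\<And>u. {x, u} \<in> E \<Longrightarrow> d \<noteq> c u"
  shows "proper_col V E n (c(x := d))"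
  unfolding proper_col_def
proof (intro conjI allI impI ballI)
  fix v assume "v \<in> V"
  then show "(c(x := d)) v < n" using assms(1,2) by (simp add: proper_col_def)
next
  fix u v assume uv: "{u, v} \<in> E"
  then have vu: "{v, u} \<in> E" by (simp add: insert_commute)
  show "(c(x := d)) u \<noteq> (c(x := d)) v"
    using proper_colD[OF assms(1) uv] assms(3)[of u] assms(3)[of v] uv vu by auto
qed

lemma proper_col_comp_permutes:
  assumes "proper_col V E n c" "\<pi> permutes {..<n}"
  shows "proper_col V E n (\<pi> \<circ> c)"
  using assms permutes_in_image[OF assms(2)] permutes_inj[OF assms(2)]
  by (auto simp: proper_col_def inj_eq)

lemma inj_on_extends_to_permutation:
  assumes "finite U" "A \<subseteq> U" "inj_on g A" "g ` A \<subseteq> U"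
  shows "\<exists>\<pi>. \<pi> permutes U \<and> (\<forall>x\<in>A. \<pi> x = g x)"
proof -
  have "card (U - A) = card (U - g ` A)"
    using assms by (simp add: card_Diff_subset card_image finite_subset)
  then obtain h where h: "bij_betw h (U - A) (U - g ` A)"
    using finite_same_card_bij assms(1) by blast
  define \<pi> where "\<pi> x = (if x \<in> A then g x else if x \<in> U then h x else x)" for x
  have "bij_betw \<pi> A (g ` A)"
    using inj_on_imp_bij_betw[OF assms(3)] by (rule bij_betw_cong[THEN iffD1, rotated]) (simp add: \<pi>_def)
  moreover have "bij_betw \<pi> (U - A) (U - g ` A)"
    using h by (rule bij_betw_cong[THEN iffD1, rotated]) (simp add: \<pi>_def)
  ultimately have "bij_betw \<pi> (A \<union> (U - A)) (g ` A \<union> (U - g ` A))"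
    by (rule bij_betw_combine) blast
  then have "bij_betw \<pi> U U"
    using assms(2,4) by (simp add: Un_Diff_cancel Un_absorb1)
  then have "\<pi> permutes U"
    by (rule bij_imp_permutes) (use assms(2) in \<open>auto simp: \<pi>_def\<close>)
  then show ?thesis by (intro exI[of _ \<pi>]) (simp add: \<pi>_def)
qed

lemma permutation_moving_colours_above:
  assumes "H \<subseteq> {..<n}" "\<beta> < n" "\<beta> \<notin> H" "card H \<le> n - Suc j" "j < n"
  shows "\<exists>\<pi>. \<pi> permutes {..<n} \<and> \<pi> \<beta> = j \<and> (\<forall>h\<in>H. j < \<pi> h)"
proof -
  have "finite H" using assms(1) finite_subset by blast
  then obtain g where g: "g ` H \<subseteq> {j<..<n}" "inj_on g H"
    using card_le_inj[of H "{j<..<n}"] assms(4) by auto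
  have "inj_on (g(\<beta> := j)) (insert \<beta> H)" "(g(\<beta> := j)) ` insert \<beta> H \<subseteq> {..<n}"
    using g assms(3) assms(5) by (auto simp: inj_on_def)
  then obtain \<pi> where "\<pi> permutes {..<n}" "\<forall>x\<in>insert \<beta> H. \<pi> x = (g(\<beta> := j)) x"
    using inj_on_extends_to_permutation[of "{..<n}" "insert \<beta> H" "g(\<beta> := j)"] assms(1,2)
    by blast
  then show ?thesis using g(1) assms(3) by (intro exI[of _ \<pi>]) fastforce
qed

lemma proper_col_shift_colours:
  assumes c: "proper_col V E n c" and "P \<subseteq> V" "\<beta> < n" "\<beta> \<notin> c ` P"
    and "card (c ` P) \<le> n - Suc j" "j < n"
  shows "\<exists>c'. proper_col V E n c' \<and> (\<forall>x. c x = \<beta> \<longrightarrow> c' x = j) \<and> (\<forall>p\<in>P. j < c' p)"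
proof -
  have "c ` P \<subseteq> {..<n}" using c assms(2) by (auto simp: proper_col_def)
  then obtain \<pi> where "\<pi> permutes {..<n}" "\<pi> \<beta> = j" "\<forall>h\<in>c ` P. j < \<pi> h"
    using permutation_moving_colours_above[OF _ assms(3-6)] by blast
  then show ?thesis using proper_col_comp_permutes[OF c] by (intro exI[of _ "\<pi> \<circ> c"]) auto
qed

lemma ex_less_notin_if_card_less:
  assumes "A \<subseteq> {..<n}" "card A < n"
  obtains \<beta> where "\<beta> < n" "\<beta> \<notin> A"
proof -
  have "\<not> {..<n} \<subseteq> A"
    using assms card_mono[OF finite_subset[OF assms(1)], of "{..<n}"] by auto
  then show ?thesis using that by blast
qed

lemma colorable_if_colour_unused_on_edges:
  assumes "2 \<le> n" "\<delta> < n"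
    and edges: "\<And>u v. {u, v} \<in> E \<Longrightarrow> c u \<noteq> c v \<and> c u < n \<and> c u \<noteq> \<delta>"
  shows "colorable V E (n - 1)"
proof -
  define c' where
    "c' v = (if c v < \<delta> then c v else if \<delta> < c v \<and> c v < n then c v - 1 else 0)" for v
  have "proper_col V E (n - 1) c'"
    unfolding proper_col_def
  proof (intro conjI allI impI ballI)
    fix v show "c' v < n - 1" using assms(1,2) by (auto simp: c'_def)
  next
    fix u v assume uv: "{u, v} \<in> E"
    then have "{v, u} \<in> E" by (simp add: insert_commute)
    then show "c' u \<noteq> c' v" using edges[OF uv] edges[of v u] by (auto simp: c'_def)
  qed
  then show ?thesis by (auto simp: colorable_def)
qed

section \<open>The subgraphs \<open>M^r\<close> of \<open>\<bar>M\<close>\<close>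

lemma type2_edges_memD: "{Inr v, Inl u} \<in> type2_edges V E \<Longrightarrow> v \<in> V \<and> {u, v} \<in> E"
  by (auto simp: type2_edges_def doubleton_eq_iff)

lemma Inl_mem_type1_edges: "{a, b} \<in> E \<Longrightarrow> {Inl a, Inl b} \<in> type1_edges E"
  using image_eqI[of "{Inl a, Inl b}" "\<lambda>e. Inl ` e" "{a, b}" E] by (simp add: type1_edges_def)

lemma type1_edges_memE:
  assumes "{p, q} \<in> type1_edges E"
  obtains a b where "{a, b} \<in> E" "p = Inl a" "q = Inl b"
proof -
  obtain e where e: "e \<in> E" "{p, q} = Inl ` e" using assms by (auto simp: type1_edges_def)
  then obtain a b where ab: "p = Inl a" "q = Inl b" by blast
  then have "Inl ` e = Inl ` {a, b}" using e(2) by auto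
  then have "e = {a, b}" by (rule inj_image_eq_iff[OF inj_Inl, THEN iffD1])
  then show ?thesis using that e(1) ab by blast
qed

context
  fixes V :: "'a set" and E :: "'a set set" and S :: "('a + 'a) set set"
    and X :: "('a + 'a) set set" and n :: nat and c :: "'a + 'a \<Rightarrow> nat"
  assumes c: "proper_col (sub_verts V S) (sub_edges E S - X) n c"
begin

lemma proper_col_sub_Inl_less: "v \<in> V \<Longrightarrow> c (Inl v) < n"
  using c by (simp add: proper_col_def sub_verts_def)

lemma proper_col_sub_Inr_less: "w \<in> fwd S \<Longrightarrow> c (Inr w) < n"
  using c by (simp add: proper_col_def sub_verts_def)

lemma proper_col_sub_type1:
  "{a, b} \<in> E \<Longrightarrow> {Inl a, Inl b} \<notin> X \<Longrightarrow> c (Inl a) \<noteq> c (Inl b)"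
  using c Inl_mem_type1_edges[of a b E] by (simp add: proper_col_def sub_edges_def)

lemma proper_col_sub_type2:
  "{Inr w, Inl u} \<in> S \<Longrightarrow> {Inr w, Inl u} \<notin> X \<Longrightarrow> c (Inr w) \<noteq> c (Inl u)"
  using c by (simp add: proper_col_def sub_edges_def)

end

lemma proper_col_subI:
  assumes S: "S \<subseteq> type2_edges V E"
    and Inl_less: "\<And>v. v \<in> V \<Longrightarrow> c (Inl v) < n"
    and Inr_less: "\<And>w. w \<in> fwd S \<Longrightarrow> c (Inr w) < n"
    and type1: "\<And>a b. {a, b} \<in> E \<Longrightarrow> {Inl a, Inl b} \<notin> X \<Longrightarrow> c (Inl a) \<noteq> c (Inl b)"
    and type2: "\<And>u w. {Inr w, Inl u} \<in> S \<Longrightarrow> {Inr w, Inl u} \<notin> X \<Longrightarrow> c (Inr w) \<noteq> c (Inl u)"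
  shows "proper_col (sub_verts V S) (sub_edges E S - X) n c"
  unfolding proper_col_def
proof (intro conjI allI impI ballI)
  fix x assume "x \<in> sub_verts V S"
  then show "c x < n" using Inl_less Inr_less by (auto simp: sub_verts_def)
next
  fix p q assume pq: "{p, q} \<in> sub_edges E S - X"
  show "c p \<noteq> c q"
  proof (cases "{p, q} \<in> type1_edges E")
    case True
    then obtain a b where "{a, b} \<in> E" "p = Inl a" "q = Inl b" by (rule type1_edges_memE)
    then show ?thesis using type1 pq by auto
  next
    case False
    then have "{p, q} \<in> S - X" "{p, q} \<in> type2_edges V E" using pq S by (auto simp: sub_edges_def)
    then obtain u w where uw: "{p, q} = {Inr w, Inl u}" "{Inr w, Inl u} \<in> S" "{Inr w, Inl u} \<notin> X"
      by (auto simp: type2_edges_def)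
    have "c (Inr w) \<noteq> c (Inl u)" using uw(2,3) by (rule type2)
    then show ?thesis using uw(1) by (auto simp: doubleton_eq_iff)
  qed
qed

lemma graph_edge_in_verts: "graph V E \<Longrightarrow> {u, w} \<in> E \<Longrightarrow> u \<in> V \<and> w \<in> V"
  by (auto simp: graph_def)

lemma critical_graph: "critical V E n \<Longrightarrow> graph V E"
  by (simp add: critical_def)

lemma fwd_memI: "{Inr v, Inl u} \<in> S \<Longrightarrow> v \<in> fwd S"
  by (auto simp: fwd_def)

lemma not_admits_type2_edges:
  assumes crit: "critical V E n" and "2 \<le> n" "r \<le> n"
  shows "\<not> admits V E n r (type2_edges V E)"
proof
  define T where "T = type2_edges V E"
  assume "admits V E n r (type2_edges V E)"
  then obtain c where c: "proper_col (sub_verts V T) (sub_edges E T - {}) n c"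
    and card: "card (c ` Inr ` fwd T) \<le> r - 1" by (auto simp: admits_def T_def)
  define F where "F = c ` Inr ` fwd T"
  have F: "F \<subseteq> {..<n}" using proper_col_sub_Inr_less[OF c] by (auto simp: F_def)
  moreover have "card F < n" using card assms(2,3) by (simp add: F_def)
  ultimately obtain \<delta> where \<delta>: "\<delta> < n" "\<delta> \<notin> F" by (rule ex_less_notin_if_card_less)
  have nbr: "c (Inr w) \<in> F \<and> c (Inr w) \<noteq> c (Inl u) \<and> c (Inl w) < n \<and> c (Inl u) \<noteq> c (Inl w)"
    if uw: "{u, w} \<in> E" for u w
  proof -
    have w: "w \<in> V" using graph_edge_in_verts[OF critical_graph[OF crit] uw] by blast
    then have uwT: "{Inr w, Inl u} \<in> T" using uw by (auto simp: T_def type2_edges_def)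
    then have "w \<in> fwd T" by (rule fwd_memI)
    then show ?thesis
      using proper_col_sub_type2[OF c uwT] proper_col_sub_Inl_less[OF c w]
        proper_col_sub_type1[OF c uw]
      by (auto simp: F_def)
  qed
  \<comment> \<open>Recolour every vertex of colour \<open>\<delta>\<close> like its copy; \<open>\<delta>\<close> is then unused on edges.\<close>
  define D where "D w = (if c (Inl w) = \<delta> then c (Inr w) else c (Inl w))" for w
  have "D u \<noteq> D w \<and> D u < n \<and> D u \<noteq> \<delta>" if uw: "{u, w} \<in> E" for u w
  proof -
    have "{w, u} \<in> E" using uw by (simp add: insert_commute)
    then show ?thesis using nbr[OF uw] nbr[of w u] \<delta> F by (auto simp: D_def)
  qed
  then have "colorable V E (n - 1)"
    using colorable_if_colour_unused_on_edges[OF assms(2) \<delta>(1)] by blast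
  then show False using crit by (simp add: critical_def)
qed

lemma Mr_subset_type2_edges:
  assumes "is_Mr V E n r S"
  shows "S \<subseteq> type2_edges V E"
proof -
  have "(removal_step V E n r)\<^sup>*\<^sup>* (type2_edges V E) S" using assms by (simp add: is_Mr_def)
  then show ?thesis by induction (auto simp: removal_step_def)
qed

lemma Mr_not_admits:
  assumes "critical V E n" "2 \<le> n" "r \<le> n" "is_Mr V E n r S"
  shows "\<not> admits V E n r S"
proof -
  have "(removal_step V E n r)\<^sup>*\<^sup>* (type2_edges V E) S" using assms(4) by (simp add: is_Mr_def)
  then show ?thesis
    by induction (auto simp: removal_step_def not_admits_type2_edges[OF assms(1-3)])
qed

lemma Mr_fwd_nonempty:
  assumes crit: "critical V E n" and "2 \<le> n" "r \<le> n" and Mr: "is_Mr V E n r S"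
  shows "fwd S \<noteq> {}"
proof
  assume empty: "fwd S = {}"
  obtain \<phi> where \<phi>: "proper_col V E n \<phi>" using crit by (auto simp: critical_def colorable_def)
  have "proper_col (sub_verts V S) (sub_edges E S - {}) n (case_sum \<phi> (\<lambda>_. 0))"
  proof (rule proper_col_subI[OF Mr_subset_type2_edges[OF Mr]])
    fix u w assume "{Inr w, Inl u} \<in> S"
    then show "case_sum \<phi> (\<lambda>_. 0) (Inr w) \<noteq> case_sum \<phi> (\<lambda>_. 0) (Inl u)"
      using fwd_memI[of w u S] empty by blast
  qed (use \<phi> empty in \<open>auto simp: proper_col_def\<close>)
  then have "admits V E n r S" using empty by (auto simp: admits_def)
  then show False using Mr_not_admits[OF assms] by blast
qed

lemma Mr_colouring_separating:
  assumes crit: "critical V E n" and "2 \<le> n" "r \<le> n" and Mr: "is_Mr V E n r S"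
    and v: "v \<in> fwd S"
  shows "\<exists>c. proper_col (sub_verts V S) (sub_edges E S) n c \<and>
    card (c ` Inr ` (fwd S - {v})) \<le> r - 1 \<and> c (Inr v) \<notin> c ` Inr ` (fwd S - {v})"
proof -
  have S: "S \<subseteq> type2_edges V E" by (rule Mr_subset_type2_edges[OF Mr])
  obtain u where uv: "{Inr v, Inl u} \<in> S" using v by (auto simp: fwd_def)
  define e where "e = {Inr v, Inl u}"
  have "admits V E n r (S - {e})" using Mr uv by (simp add: is_Mr_def e_def)
  then obtain c0 where c0: "proper_col (sub_verts V (S - {e})) (sub_edges E (S - {e}) - {}) n c0"
    and card0: "card (c0 ` Inr ` fwd (S - {e})) \<le> r - 1" by (auto simp: admits_def)
  have "v \<in> V" using type2_edges_memD[of v u V E] S uv by blast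
  have fwd_sub: "fwd S - {v} \<subseteq> fwd (S - {e})"
    unfolding fwd_def e_def by (auto simp: doubleton_eq_iff)
  \<comment> \<open>\<open>Inr v\<close> has the same neighbours as \<open>Inl v\<close>, so it may take the colour of \<open>Inl v\<close>.\<close>
  define c where "c = c0(Inr v := c0 (Inl v))"
  have proper: "proper_col (sub_verts V S) (sub_edges E S - {}) n c"
  proof (rule proper_col_subI[OF S])
    fix x assume "x \<in> V"
    then show "c (Inl x) < n" using proper_col_sub_Inl_less[OF c0] by (simp add: c_def)
  next
    fix w assume w: "w \<in> fwd S"
    show "c (Inr w) < n"
    proof (cases "w = v")
      case True
      then show ?thesis using proper_col_sub_Inl_less[OF c0 \<open>v \<in> V\<close>] by (simp add: c_def)
    next
      case False
      then have "w \<in> fwd (S - {e})" using w fwd_sub by blast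
      then show ?thesis using proper_col_sub_Inr_less[OF c0] False by (simp add: c_def)
    qed
  next
    fix a b assume "{a, b} \<in> E"
    then show "c (Inl a) \<noteq> c (Inl b)" using proper_col_sub_type1[OF c0] by (simp add: c_def)
  next
    fix u' w assume uw: "{Inr w, Inl u'} \<in> S"
    show "c (Inr w) \<noteq> c (Inl u')"
    proof (cases "w = v")
      case True
      then have "{u', v} \<in> E" using type2_edges_memD[of v u' V E] S uw by blast
      then have "c0 (Inl u') \<noteq> c0 (Inl v)" using proper_col_sub_type1[OF c0] by simp
      then show ?thesis using True by (simp add: c_def)
    next
      case False
      then have "{Inr w, Inl u'} \<in> S - {e}" using uw by (simp add: e_def doubleton_eq_iff)
      then have "c0 (Inr w) \<noteq> c0 (Inl u')" using proper_col_sub_type2[OF c0] by simp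
      then show ?thesis using False by (simp add: c_def)
    qed
  qed
  have "c ` Inr ` (fwd S - {v}) \<subseteq> c0 ` Inr ` fwd (S - {e})"
    using fwd_sub by (auto simp: c_def)
  moreover have "finite (c0 ` Inr ` fwd (S - {e}))"
    by (rule finite_subset[of _ "{..<n}"]) (use proper_col_sub_Inr_less[OF c0] in auto)
  ultimately have card: "card (c ` Inr ` (fwd S - {v})) \<le> r - 1"
    using card0 by (meson card_mono order_trans)
  have notin: "c (Inr v) \<notin> c ` Inr ` (fwd S - {v})"
  proof
    assume v_old: "c (Inr v) \<in> c ` Inr ` (fwd S - {v})"
    have "fwd S = insert v (fwd S - {v})" using v by blast
    then have "c ` Inr ` fwd S = insert (c (Inr v)) (c ` Inr ` (fwd S - {v}))" by (metis image_insert)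
    then have "c ` Inr ` fwd S = c ` Inr ` (fwd S - {v})" using v_old by (simp only: insert_absorb)
    then have "card (c ` Inr ` fwd S) \<le> r - 1" using card by (simp only:)
    then have "admits V E n r S" using proper unfolding admits_def by auto
    then show False using Mr_not_admits[OF crit assms(2,3) Mr] by blast
  qed
  show ?thesis using proper card notin by auto
qed

lemma Mr_colouring_marked:
  assumes crit: "critical V E n" and "2 \<le> n" "j < n" and Mr: "is_Mr V E n (n - j) S"
    and v: "v \<in> fwd S"
  shows "\<exists>c. proper_col (sub_verts V S) (sub_edges E S) n c \<and>
    c (Inr v) = j \<and> (\<forall>w\<in>fwd S - {v}. j < c (Inr w))"
proof -
  obtain c where c: "proper_col (sub_verts V S) (sub_edges E S) n c"
    and card: "card (c ` Inr ` (fwd S - {v})) \<le> n - Suc j"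
    and notin: "c (Inr v) \<notin> c ` Inr ` (fwd S - {v})"
    using Mr_colouring_separating[OF crit assms(2) _ Mr v] by auto
  have "Inr ` (fwd S - {v}) \<subseteq> sub_verts V S" by (auto simp: sub_verts_def)
  moreover have "c (Inr v) < n" using c v by (auto simp: proper_col_def sub_verts_def)
  ultimately obtain c' where "proper_col (sub_verts V S) (sub_edges E S) n c'"
    "\<forall>x. c x = c (Inr v) \<longrightarrow> c' x = j" "\<forall>p\<in>Inr ` (fwd S - {v}). j < c' p"
    using proper_col_shift_colours[OF c _ _ notin card assms(3)] by blast
  then show ?thesis by auto
qed

lemma Mr_colouring_minus_type2_edge:
  assumes "2 \<le> r" and Mr: "is_Mr V E n r S" and eS: "e \<in> S"
  shows "\<exists>c. proper_col (sub_verts V S) (sub_edges E S - {e}) n c \<and> card (c ` Inr ` fwd S) \<le> r - 1"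
proof -
  have S: "S \<subseteq> type2_edges V E" by (rule Mr_subset_type2_edges[OF Mr])
  then obtain u v where e: "e = {Inr v, Inl u}" and "v \<in> V"
    using eS by (auto simp: type2_edges_def)
  have "admits V E n r (S - {e})" using Mr eS by (simp add: is_Mr_def)
  then obtain c0 where c0: "proper_col (sub_verts V (S - {e})) (sub_edges E (S - {e}) - {}) n c0"
    and card0: "card (c0 ` Inr ` fwd (S - {e})) \<le> r - 1" by (auto simp: admits_def)
  define F where "F = c0 ` Inr ` fwd (S - {e})"
  have "finite F"
    by (rule finite_subset[of _ "{..<n}"]) (use proper_col_sub_Inr_less[OF c0] in \<open>auto simp: F_def\<close>)
  \<comment> \<open>A colour for \<open>Inr v\<close> in case the removal of \<open>e\<close> isolates it.\<close>
  obtain \<gamma> where \<gamma>: "\<gamma> < n" "card (insert \<gamma> F) \<le> r - 1"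
  proof (cases "F = {}")
    case True
    then show ?thesis
      using that[of "c0 (Inl v)"] proper_col_sub_Inl_less[OF c0 \<open>v \<in> V\<close>] assms(1) by simp
  next
    case False
    then obtain \<gamma> where "\<gamma> \<in> F" by blast
    then show ?thesis
      using that[of \<gamma>] proper_col_sub_Inr_less[OF c0] card0 by (auto simp: F_def insert_absorb)
  qed
  define c :: "'a + 'a \<Rightarrow> nat" where "c = (if v \<in> fwd (S - {e}) then c0 else c0(Inr v := \<gamma>))"
  have agree: "c (Inr w) = c0 (Inr w)" if "w \<in> fwd (S - {e})" for w
    using that by (auto simp: c_def)
  have fwd_S: "fwd S \<subseteq> insert v (fwd (S - {e}))"
    unfolding fwd_def e by (auto simp: doubleton_eq_iff)
  have Inr_cases: "c (Inr w) = \<gamma> \<or> c (Inr w) \<in> F \<and> c (Inr w) = c0 (Inr w) \<and> w \<in> fwd (S - {e})"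
    if "w \<in> fwd S" for w
    using that fwd_S agree by (cases "w \<in> fwd (S - {e})") (auto simp: c_def F_def)
  have "proper_col (sub_verts V S) (sub_edges E S - {e}) n c"
  proof (rule proper_col_subI[OF S])
    fix x assume "x \<in> V"
    then show "c (Inl x) < n" using proper_col_sub_Inl_less[OF c0] by (simp add: c_def)
  next
    fix w assume "w \<in> fwd S"
    then show "c (Inr w) < n" using Inr_cases[of w] \<gamma>(1) proper_col_sub_Inr_less[OF c0] by auto
  next
    fix a b assume "{a, b} \<in> E"
    then show "c (Inl a) \<noteq> c (Inl b)" using proper_col_sub_type1[OF c0] by (simp add: c_def)
  next
    fix u' w assume "{Inr w, Inl u'} \<in> S" "{Inr w, Inl u'} \<notin> {e}"
    then have uw: "{Inr w, Inl u'} \<in> S - {e}" by simp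
    have "c (Inl u') = c0 (Inl u')" by (simp add: c_def)
    then show "c (Inr w) \<noteq> c (Inl u')"
      using proper_col_sub_type2[OF c0 uw] agree[OF fwd_memI[OF uw]] by simp
  qed
  moreover have "c ` Inr ` fwd S \<subseteq> insert \<gamma> F" using Inr_cases by blast
  then have "card (c ` Inr ` fwd S) \<le> r - 1"
    using \<gamma>(2) card_mono[OF finite.insertI[OF \<open>finite F\<close>]] by (meson order_trans)
  ultimately show ?thesis by blast
qed

lemma critical_pos: "critical V E n \<Longrightarrow> 0 < n"
  by (cases n) (auto simp: critical_def)

lemma critical_colorable_minus_edge:
  assumes "critical V E n" "e \<in> E"
  shows "colorable V (E - {e}) (n - 1)"
proof -
  have "\<forall>e'\<in>E - {e}. e' \<subseteq> V" using critical_graph[OF assms(1)] by (auto simp: graph_def)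
  then show ?thesis using assms unfolding critical_def by blast
qed

lemma colouring_minus_type1_edge:
  assumes crit: "critical V E n" and S: "S \<subseteq> type2_edges V E" and ab: "{a, b} \<in> E"
  shows "\<exists>c. proper_col (sub_verts V S) (sub_edges E S - {{Inl a, Inl b}}) n c \<and>
    (\<forall>w. c (Inr w) = n - 1)"
proof -
  obtain \<psi> where \<psi>: "proper_col V (E - {{a, b}}) (n - 1) \<psi>"
    using critical_colorable_minus_edge[OF crit ab] by (auto simp: colorable_def)
  define c :: "'a + 'a \<Rightarrow> nat" where "c = case_sum \<psi> (\<lambda>_. n - 1)"
  have "proper_col (sub_verts V S) (sub_edges E S - {{Inl a, Inl b}}) n c"
  proof (rule proper_col_subI[OF S])
    fix x assume "x \<in> V"
    then have "\<psi> x < n - 1" using \<psi> by (simp add: proper_col_def)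
    then show "c (Inl x) < n" by (simp add: c_def)
  next
    fix w show "c (Inr w) < n" using critical_pos[OF crit] by (simp add: c_def)
  next
    fix a' b' assume "{a', b'} \<in> E" "{Inl a', Inl b'} \<notin> {{Inl a, Inl b}}"
    then have "{a', b'} \<in> E - {{a, b}}" by (auto simp: doubleton_eq_iff)
    then show "c (Inl a') \<noteq> c (Inl b')" using proper_colD[OF \<psi>] by (simp add: c_def)
  next
    fix u w assume "{Inr w, Inl u} \<in> S"
    then have "{Inr w, Inl u} \<in> type2_edges V E" using S by blast
    then have "{u, w} \<in> E" by (rule type2_edges_memD[THEN conjunct2])
    then have "u \<in> V" using graph_edge_in_verts[OF critical_graph[OF crit]] by blast
    then have "\<psi> u < n - 1" using \<psi> by (simp add: proper_col_def)
    then show "c (Inr w) \<noteq> c (Inl u)" by (simp add: c_def)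
  qed
  then show ?thesis by (auto simp: c_def)
qed

lemma Mr_colouring_minus_edge:
  assumes crit: "critical V E n" and "j + 2 \<le> n" and Mr: "is_Mr V E n (n - j) S"
    and e: "e \<in> sub_edges E S"
  shows "\<exists>c. proper_col (sub_verts V S) (sub_edges E S - {e}) n c \<and> (\<forall>w\<in>fwd S. j < c (Inr w))"
proof (cases "e \<in> type1_edges E")
  case True
  then obtain e' where "e' \<in> E" "e = Inl ` e'" by (auto simp: type1_edges_def)
  moreover obtain a b where "e' = {a, b}"
    using \<open>e' \<in> E\<close> critical_graph[OF crit] by (auto simp: graph_def card_2_iff)
  ultimately have "e = {Inl a, Inl b}" "{a, b} \<in> E" by auto
  then obtain c where "proper_col (sub_verts V S) (sub_edges E S - {e}) n c" "\<forall>w. c (Inr w) = n - 1"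
    using colouring_minus_type1_edge[OF crit Mr_subset_type2_edges[OF Mr], of a b] by blast
  then show ?thesis using assms(2) by auto
next
  case False
  then have "e \<in> S" using e by (simp add: sub_edges_def)
  then obtain c where c: "proper_col (sub_verts V S) (sub_edges E S - {e}) n c"
    and card: "card (c ` Inr ` fwd S) \<le> n - Suc j"
    using Mr_colouring_minus_type2_edge[OF _ Mr] assms(2) by fastforce
  have sub: "Inr ` fwd S \<subseteq> sub_verts V S" by (auto simp: sub_verts_def)
  have "c ` Inr ` fwd S \<subseteq> {..<n}" using c by (auto simp: proper_col_def sub_verts_def)
  moreover have "card (c ` Inr ` fwd S) < n" using card assms(2) by simp
  ultimately obtain \<beta> where "\<beta> < n" "\<beta> \<notin> c ` Inr ` fwd S" by (rule ex_less_notin_if_card_less)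
  moreover have "j < n" using assms(2) by simp
  ultimately obtain c' where "proper_col (sub_verts V S) (sub_edges E S - {e}) n c'"
    "\<forall>p\<in>Inr ` fwd S. j < c' p"
    using proper_col_shift_colours[OF c sub _ _ card] by blast
  then show ?thesis by auto
qed

section \<open>The graphs \<open>W\<close>\<close>

text \<open>The \<open>LEAST\<close> is \<open>t\<close> when every coordinate \<open>l < t\<close> has colour \<open>l\<close> in component \<open>l\<close>.\<close>

definition W_col :: "nat \<Rightarrow> (nat \<Rightarrow> 'a + 'a \<Rightarrow> nat) \<Rightarrow> (nat \<times> ('a + 'a)) + 'a list \<Rightarrow> nat" where
  "W_col t cc = case_sum (case_prod cc) (\<lambda>xs. LEAST l. l < t \<longrightarrow> cc l (Inr (xs ! l)) \<noteq> l)"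

lemma W_col_Inl [simp]: "W_col t cc (Inl (j, x)) = cc j x"
  by (simp add: W_col_def)

lemma W_col_Inr_le: "W_col t cc (Inr xs) \<le> t"
  unfolding W_col_def by (auto intro: Least_le)

lemma W_col_Inr_eq_iff: "W_col t cc (Inr xs) = t \<longleftrightarrow> (\<forall>l<t. cc l (Inr (xs ! l)) = l)"
proof
  assume "W_col t cc (Inr xs) = t"
  then have least: "(LEAST l. l < t \<longrightarrow> cc l (Inr (xs ! l)) \<noteq> l) = t" by (simp add: W_col_def)
  show "\<forall>l<t. cc l (Inr (xs ! l)) = l"
    using not_less_Least[of _ "\<lambda>l. l < t \<longrightarrow> cc l (Inr (xs ! l)) \<noteq> l"] least by auto
next
  assume "\<forall>l<t. cc l (Inr (xs ! l)) = l"
  then have "(LEAST l. l < t \<longrightarrow> cc l (Inr (xs ! l)) \<noteq> l) = t"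
    by (intro Least_equality) (auto simp: not_less)
  then show "W_col t cc (Inr xs) = t" by (simp add: W_col_def)
qed

lemma W_col_Inr_neq:
  assumes above: "\<forall>l<t. l \<le> cc l (Inr (xs ! l))" and "j < t"
  shows "W_col t cc (Inr xs) \<noteq> cc j (Inr (xs ! j))"
proof
  define m where "m = W_col t cc (Inr xs)"
  have m: "m < t \<longrightarrow> cc m (Inr (xs ! m)) \<noteq> m"
    using LeastI[of "\<lambda>l. l < t \<longrightarrow> cc l (Inr (xs ! l)) \<noteq> l" t] by (simp add: m_def W_col_def)
  assume "W_col t cc (Inr xs) = cc j (Inr (xs ! j))"
  then have eq: "m = cc j (Inr (xs ! j))" by (simp add: m_def)
  show False
  proof (cases "cc j (Inr (xs ! j)) = j")
    case True
    then show ?thesis using m eq \<open>j < t\<close> by simp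
  next
    case False
    then have "m \<le> j" unfolding m_def W_col_def using \<open>j < t\<close> by (auto intro: Least_le)
    then show ?thesis using eq above \<open>j < t\<close> False by fastforce
  qed
qed

lemma W_edges_memE:
  assumes "e \<in> W_edges E t Ss"
  obtains (component) j e' where "j < t" "e' \<in> sub_edges E (Ss j)" "e = (\<lambda>x. Inl (j, x)) ` e'"
  | (active) j xs where "j < t" "xs \<in> active t Ss" "e = {Inl (j, Inr (xs ! j)), Inr xs}"
  using assms unfolding W_edges_def by blast

lemma proper_col_W_col:
  assumes "t < n"
    and comp: "\<And>j. j < t \<Longrightarrow> proper_col (sub_verts V (Ss j)) (sub_edges E (Ss j) - X j) n (cc j)"
    and above: "\<And>j w. j < t \<Longrightarrow> w \<in> fwd (Ss j) \<Longrightarrow> j \<le> cc j (Inr w)"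
    and removed: "\<And>j e. j < t \<Longrightarrow> e \<in> X j \<Longrightarrow> (\<lambda>x. Inl (j, x)) ` e \<in> R"
  shows "proper_col (W_verts V t Ss) (W_edges E t Ss - R) n (W_col t cc)"
  unfolding proper_col_def
proof (intro conjI allI impI ballI)
  fix z assume "z \<in> W_verts V t Ss"
  then consider j x where "j < t" "x \<in> sub_verts V (Ss j)" "z = Inl (j, x)" | xs where "z = Inr xs"
    by (auto simp: W_verts_def)
  then show "W_col t cc z < n"
  proof cases
    case 1
    then show ?thesis using comp by (simp add: proper_col_def)
  next
    case 2
    then show ?thesis using W_col_Inr_le[of t cc xs] \<open>t < n\<close> by simp
  qed
next
  fix p q assume pq: "{p, q} \<in> W_edges E t Ss - R"
  then have "{p, q} \<in> W_edges E t Ss" by simp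
  then show "W_col t cc p \<noteq> W_col t cc q"
  proof (cases rule: W_edges_memE)
    case (component j e)
    let ?f = "\<lambda>x. Inl (j, x)"
    have "e \<notin> X j"
    proof
      assume "e \<in> X j"
      then have "?f ` e \<in> R" by (rule removed[OF component(1)])
      then show False using pq component(3) by simp
    qed
    moreover have "p \<in> ?f ` e" "q \<in> ?f ` e" unfolding component(3)[symmetric] by simp_all
    then obtain a b where ab: "p = Inl (j, a)" "q = Inl (j, b)" by blast
    have "x \<in> e \<longleftrightarrow> Inl (j, x) \<in> {p, q}" for x using component(3) by auto
    then have "e = {a, b}" using ab by auto
    ultimately have "{a, b} \<in> sub_edges E (Ss j) - X j" using component(2) by simp
    then show ?thesis using proper_colD[OF comp[OF component(1)]] ab by simp
  next
    case (active j xs)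
    have "\<forall>l<t. l \<le> cc l (Inr (xs ! l))" using above active(2) by (auto simp: active_def)
    then have "W_col t cc (Inr xs) \<noteq> cc j (Inr (xs ! j))" using active(1) by (rule W_col_Inr_neq)
    then show ?thesis using active(3) by (auto simp: doubleton_eq_iff)
  qed
qed

lemma map_mem_active: "(\<And>j. j < t \<Longrightarrow> x j \<in> fwd (Ss j)) \<Longrightarrow> map x [0..<t] \<in> active t Ss"
  by (simp add: active_def)

lemma active_eq_iff: "xs \<in> active t Ss \<Longrightarrow> ys \<in> active t Ss \<Longrightarrow> xs = ys \<longleftrightarrow> (\<forall>l<t. xs ! l = ys ! l)"
  by (auto simp: active_def intro: nth_equalityI)

lemma W_edges_component:
  assumes "j < t" "{p, q} \<in> sub_edges E (Ss j)"
  shows "{Inl (j, p), Inl (j, q)} \<in> W_edges E t Ss"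
proof -
  have "(\<lambda>x. Inl (j, x)) ` {p, q} \<in> W_edges E t Ss" using assms unfolding W_edges_def by blast
  then show ?thesis by simp
qed

lemma W_edges_active:
  "j < t \<Longrightarrow> xs \<in> active t Ss \<Longrightarrow> {Inl (j, Inr (xs ! j)), Inr xs} \<in> W_edges E t Ss"
  unfolding W_edges_def by blast

lemma W_edges_Inr_neighbour:
  assumes "{Inr xs, u} \<in> W_edges E t Ss"
  obtains j where "j < t" "u = Inl (j, Inr (xs ! j))"
  using assms
proof (cases rule: W_edges_memE)
  case (component j e')
  then have "Inr xs \<in> (\<lambda>x. Inl (j, x)) ` e'" by blast
  then show ?thesis by blast
next
  case (active j ys)
  then show ?thesis using that by (auto simp: doubleton_eq_iff)
qed

lemma proper_col_W_component:
  assumes "proper_col (W_verts V t Ss) (W_edges E t Ss) n c" "j < t"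
  shows "proper_col (sub_verts V (Ss j)) (sub_edges E (Ss j)) n (\<lambda>x. c (Inl (j, x)))"
  unfolding proper_col_def
proof (intro conjI allI impI ballI)
  fix x assume "x \<in> sub_verts V (Ss j)"
  then have "Inl (j, x) \<in> W_verts V t Ss" using assms(2) by (auto simp: W_verts_def)
  then show "c (Inl (j, x)) < n" using assms(1) by (simp add: proper_col_def)
next
  fix p q assume "{p, q} \<in> sub_edges E (Ss j)"
  then show "c (Inl (j, p)) \<noteq> c (Inl (j, q))"
    using proper_colD[OF assms(1) W_edges_component[OF assms(2)]] by simp
qed

lemma greedy_representatives:
  assumes "finite U" "C \<subseteq> U" "card C = m" "\<And>l. l < m \<Longrightarrow> card (U - F l) \<le> l"
  shows "\<exists>\<sigma>. (\<forall>l<m. \<sigma> l \<in> F l) \<and> \<sigma> ` {..<m} = C"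
  using assms(2-4)
proof (induction m arbitrary: C)
  case 0
  then show ?case using finite_subset[OF _ assms(1)] by auto
next
  case (Suc m)
  have "\<not> C \<subseteq> U - F m"
    using card_mono[OF finite_Diff[OF assms(1)], of C "F m"] Suc.prems(2,3) by force
  then obtain \<gamma> where \<gamma>: "\<gamma> \<in> C" "\<gamma> \<in> F m" using Suc.prems(1) by blast
  have "finite C" using finite_subset[OF Suc.prems(1) assms(1)] .
  then have "C - {\<gamma>} \<subseteq> U" "card (C - {\<gamma>}) = m" using Suc.prems(1,2) \<gamma>(1) by auto
  moreover have "\<And>l. l < m \<Longrightarrow> card (U - F l) \<le> l" using Suc.prems(3) by simp
  ultimately obtain \<sigma> where \<sigma>: "\<forall>l<m. \<sigma> l \<in> F l" "\<sigma> ` {..<m} = C - {\<gamma>}"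
    using Suc.IH by blast
  have "(\<sigma>(m := \<gamma>)) ` {..<m} = \<sigma> ` {..<m}" by (intro image_cong) auto
  then have "(\<sigma>(m := \<gamma>)) ` {..<Suc m} = insert \<gamma> (C - {\<gamma>})"
    unfolding lessThan_Suc image_insert \<sigma>(2) by simp
  also have "\<dots> = C" using \<gamma>(1) by (rule insert_Diff)
  finally have "(\<sigma>(m := \<gamma>)) ` {..<Suc m} = C" .
  moreover have "\<forall>l<Suc m. (\<sigma>(m := \<gamma>)) l \<in> F l" using \<sigma>(1) \<gamma>(2) by (auto simp: less_Suc_eq)
  ultimately show ?case by blast
qed

locale W_construction =
  fixes V :: "'a set" and E :: "'a set set" and n t :: nat
    and Ss :: "nat \<Rightarrow> ('a + 'a) set set"
  assumes critical: "critical V E n" and two_le_n: "2 \<le> n" and t_less_n: "t < n"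
    and components_Mr: "\<And>j. j < t \<Longrightarrow> is_Mr V E n (n - j) (Ss j)"
begin

lemma fwd_nonempty: "j < t \<Longrightarrow> fwd (Ss j) \<noteq> {}"
  using Mr_fwd_nonempty[OF critical two_le_n diff_le_self components_Mr] .

lemma active_nonempty: "active t Ss \<noteq> {}"
proof -
  have "(SOME v. v \<in> fwd (Ss j)) \<in> fwd (Ss j)" if "j < t" for j
    using fwd_nonempty[OF that] by (simp add: some_in_eq)
  then have "map (\<lambda>j. SOME v. v \<in> fwd (Ss j)) [0..<t] \<in> active t Ss" by (rule map_mem_active)
  then show ?thesis by blast
qed

lemma marked_components:
  assumes a: "a \<in> active t Ss"
  obtains cc where "\<And>j. j < t \<Longrightarrow> proper_col (sub_verts V (Ss j)) (sub_edges E (Ss j)) n (cc j)"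
    and "\<And>j w. j < t \<Longrightarrow> w \<in> fwd (Ss j) \<Longrightarrow> j \<le> cc j (Inr w) \<and> (cc j (Inr w) = j \<longleftrightarrow> w = a ! j)"
proof -
  have "\<exists>c. j < t \<longrightarrow> proper_col (sub_verts V (Ss j)) (sub_edges E (Ss j)) n c \<and>
      (\<forall>w\<in>fwd (Ss j). j \<le> c (Inr w) \<and> (c (Inr w) = j \<longleftrightarrow> w = a ! j))" for j
  proof (cases "j < t")
    case True
    then have "a ! j \<in> fwd (Ss j)" "j < n" using a t_less_n by (auto simp: active_def)
    then obtain c where c: "proper_col (sub_verts V (Ss j)) (sub_edges E (Ss j)) n c"
      "c (Inr (a ! j)) = j" "\<forall>w\<in>fwd (Ss j) - {a ! j}. j < c (Inr w)"
      using Mr_colouring_marked[OF critical two_le_n _ components_Mr[OF True]] by blast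
    have "j \<le> c (Inr w) \<and> (c (Inr w) = j \<longleftrightarrow> w = a ! j)" if "w \<in> fwd (Ss j)" for w
      using c(2) c(3)[rule_format, of w] that by (cases "w = a ! j") auto
    then show ?thesis using c(1) by blast
  qed simp
  then obtain cc where cc: "\<forall>j. j < t \<longrightarrow> proper_col (sub_verts V (Ss j)) (sub_edges E (Ss j)) n (cc j) \<and>
      (\<forall>w\<in>fwd (Ss j). j \<le> cc j (Inr w) \<and> (cc j (Inr w) = j \<longleftrightarrow> w = a ! j))"
    by (metis choice)
  show ?thesis by (rule that) (use cc in auto)
qed

lemma W_colouring_marked:
  assumes a: "a \<in> active t Ss"
  obtains c where "proper_col (W_verts V t Ss) (W_edges E t Ss) n c"
    and "c ` Inr ` active t Ss \<subseteq> {..t}" and "{x \<in> active t Ss. c (Inr x) = t} = {a}"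
    and "\<And>j. j < t \<Longrightarrow> c (Inl (j, Inr (a ! j))) = j"
proof -
  obtain cc where
    proper: "\<And>j. j < t \<Longrightarrow> proper_col (sub_verts V (Ss j)) (sub_edges E (Ss j)) n (cc j)" and
    marked: "\<And>j w. j < t \<Longrightarrow> w \<in> fwd (Ss j) \<Longrightarrow> j \<le> cc j (Inr w) \<and> (cc j (Inr w) = j \<longleftrightarrow> w = a ! j)"
    using marked_components[OF a] by blast
  have "proper_col (W_verts V t Ss) (W_edges E t Ss - {}) n (W_col t cc)"
    by (rule proper_col_W_col[where X = "\<lambda>_. {}"]) (use t_less_n proper marked in auto)
  moreover have "W_col t cc (Inr x) = t \<longleftrightarrow> x = a" if x: "x \<in> active t Ss" for x
  proof -
    have "cc l (Inr (x ! l)) = l \<longleftrightarrow> x ! l = a ! l" if "l < t" for l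
      using marked[OF that] x that by (auto simp: active_def)
    then have "(\<forall>l<t. cc l (Inr (x ! l)) = l) \<longleftrightarrow> (\<forall>l<t. x ! l = a ! l)" by blast
    then show ?thesis unfolding W_col_Inr_eq_iff active_eq_iff[OF x a] .
  qed
  moreover have "cc j (Inr (a ! j)) = j" if "j < t" for j
    using marked[OF that] a that by (auto simp: active_def)
  ultimately show ?thesis using that[of "W_col t cc"] a W_col_Inr_le[of t cc] by auto
qed

lemma component_colours_card:
  assumes c: "proper_col (W_verts V t Ss) (W_edges E t Ss) n c" and l: "l < t"
  shows "n - l \<le> card ((\<lambda>v. c (Inl (l, Inr v))) ` fwd (Ss l))"
proof (rule ccontr)
  assume "\<not> ?thesis"
  then have "card ((\<lambda>x. c (Inl (l, x))) ` Inr ` fwd (Ss l)) \<le> n - l - 1"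
    by (simp add: image_image)
  then have "admits V E n (n - l) (Ss l)"
    using proper_col_W_component[OF c l] unfolding admits_def by blast
  then show False using Mr_not_admits[OF critical two_le_n diff_le_self components_Mr[OF l]] by blast
qed

lemma W_active_colours_gt:
  assumes c: "proper_col (W_verts V t Ss) (W_edges E t Ss) n c"
  shows "t < card (c ` Inr ` active t Ss)"
proof (rule ccontr)
  define C where "C = c ` Inr ` active t Ss"
  define F where "F l = (\<lambda>v. c (Inl (l, Inr v))) ` fwd (Ss l)" for l
  assume "\<not> t < card (c ` Inr ` active t Ss)"
  then have m: "card C \<le> t" by (simp add: C_def)
  have "C \<subseteq> {..<n}" using c by (auto simp: C_def W_verts_def proper_col_def)
  have F: "F l \<subseteq> {..<n}" if "l < t" for l
    using c that by (auto simp: F_def W_verts_def sub_verts_def proper_col_def)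
  have "card ({..<n} - F l) \<le> l" if "l < card C" for l
  proof -
    have "l < t" using that m by simp
    then have "finite (F l)" using F finite_subset by blast
    then have "card ({..<n} - F l) = n - card (F l)" using F[OF \<open>l < t\<close>] by (simp add: card_Diff_subset)
    then show ?thesis using component_colours_card[OF c \<open>l < t\<close>] unfolding F_def by linarith
  qed
  then have "\<exists>\<sigma>. (\<forall>l<card C. \<sigma> l \<in> F l) \<and> \<sigma> ` {..<card C} = C"
    by (rule greedy_representatives[OF finite_lessThan \<open>C \<subseteq> {..<n}\<close> refl])
  then obtain \<sigma> where \<sigma>: "\<forall>l<card C. \<sigma> l \<in> F l" "\<sigma> ` {..<card C} = C" by blast
  have "\<exists>v. l < t \<longrightarrow> v \<in> fwd (Ss l) \<and> (l < card C \<longrightarrow> c (Inl (l, Inr v)) = \<sigma> l)" for l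
  proof (cases "l < card C")
    case True
    then have "\<sigma> l \<in> F l" using \<sigma>(1) by blast
    then obtain v where "v \<in> fwd (Ss l)" "c (Inl (l, Inr v)) = \<sigma> l" by (auto simp: F_def)
    then show ?thesis by blast
  next
    case False
    then show ?thesis using fwd_nonempty by blast
  qed
  then obtain pick where pick: "\<forall>l. l < t \<longrightarrow> pick l \<in> fwd (Ss l) \<and> (l < card C \<longrightarrow> c (Inl (l, Inr (pick l))) = \<sigma> l)"
    by (metis choice)
  define xs where "xs = map pick [0..<t]"
  have xs: "xs \<in> active t Ss" unfolding xs_def by (rule map_mem_active) (use pick in blast)
  then have "c (Inr xs) \<in> C" by (simp add: C_def)
  then have "c (Inr xs) \<in> \<sigma> ` {..<card C}" by (simp only: \<sigma>(2))
  then obtain l where l: "l < card C" "c (Inr xs) = \<sigma> l" by blast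
  then have "l < t" using m by simp
  then have "xs ! l = pick l" by (simp add: xs_def)
  then have "c (Inl (l, Inr (xs ! l))) = c (Inr xs)" using pick \<open>l < t\<close> l by simp
  moreover have "c (Inl (l, Inr (xs ! l))) \<noteq> c (Inr xs)"
    using proper_colD[OF c W_edges_active[OF \<open>l < t\<close> xs]] .
  ultimately show False by simp
qed

lemma W_colouring_minus_edge:
  assumes e: "e \<in> W_edges E t Ss"
  obtains c where "proper_col (W_verts V t Ss) (W_edges E t Ss - {e}) n c"
    and "c ` Inr ` active t Ss \<subseteq> {..<t}"
  using e
proof (cases rule: W_edges_memE)
  case (component j0 e')
  obtain a where a: "a \<in> active t Ss" using active_nonempty by blast
  obtain cc where
    proper: "\<And>j. j < t \<Longrightarrow> proper_col (sub_verts V (Ss j)) (sub_edges E (Ss j)) n (cc j)" and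
    marked: "\<And>j w. j < t \<Longrightarrow> w \<in> fwd (Ss j) \<Longrightarrow> j \<le> cc j (Inr w) \<and> (cc j (Inr w) = j \<longleftrightarrow> w = a ! j)"
    using marked_components[OF a] by blast
  have "j0 + 2 \<le> n" using component(1) t_less_n by simp
  then obtain c0 where c0: "proper_col (sub_verts V (Ss j0)) (sub_edges E (Ss j0) - {e'}) n c0"
    and above0: "\<forall>w\<in>fwd (Ss j0). j0 < c0 (Inr w)"
    using Mr_colouring_minus_edge[OF critical _ components_Mr[OF component(1)] component(2)] by blast
  define cc' where "cc' = cc(j0 := c0)"
  have "proper_col (W_verts V t Ss) (W_edges E t Ss - {e}) n (W_col t cc')"
  proof (rule proper_col_W_col[where X = "\<lambda>j. if j = j0 then {e'} else {}"])
    show "t < n" by (rule t_less_n)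
  next
    fix j assume "j < t"
    then show "proper_col (sub_verts V (Ss j)) (sub_edges E (Ss j) - (if j = j0 then {e'} else {})) n (cc' j)"
      using c0 proper by (simp add: cc'_def)
  next
    fix j w assume "j < t" "w \<in> fwd (Ss j)"
    then show "j \<le> cc' j (Inr w)" using above0 marked by (auto simp: cc'_def less_imp_le)
  next
    fix j e'' assume "e'' \<in> (if j = j0 then {e'} else {})"
    then show "(\<lambda>x. Inl (j, x)) ` e'' \<in> {e}" using component(3) by (simp split: if_splits)
  qed
  moreover have "W_col t cc' (Inr x) < t" if x: "x \<in> active t Ss" for x
  proof -
    have "x ! j0 \<in> fwd (Ss j0)" using x component(1) by (simp add: active_def)
    then have "j0 < c0 (Inr (x ! j0))" using above0 by blast
    then have "cc' j0 (Inr (x ! j0)) \<noteq> j0" by (simp add: cc'_def)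
    then have "W_col t cc' (Inr x) \<noteq> t" using W_col_Inr_eq_iff component(1) by blast
    then show ?thesis using W_col_Inr_le[of t cc' x] by simp
  qed
  ultimately show ?thesis using that by blast
next
  case (active j0 b)
  obtain c where c: "proper_col (W_verts V t Ss) (W_edges E t Ss) n c"
    and colours: "c ` Inr ` active t Ss \<subseteq> {..t}" and unique: "{x \<in> active t Ss. c (Inr x) = t} = {b}"
    and index: "\<And>j. j < t \<Longrightarrow> c (Inl (j, Inr (b ! j))) = j"
    using W_colouring_marked[OF active(2)] by blast
  \<comment> \<open>\<open>b\<close> is the only active vertex of colour \<open>t\<close>; without \<open>e\<close> it may take colour \<open>j0\<close>\<close>
  have "proper_col (W_verts V t Ss) (W_edges E t Ss - {e}) n (c(Inr b := j0))"
  proof (rule proper_col_fun_upd)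
    show "proper_col (W_verts V t Ss) (W_edges E t Ss - {e}) n c"
      using c by (rule proper_col_antimono) blast
    show "j0 < n" using active(1) t_less_n by simp
  next
    fix u assume u: "{Inr b, u} \<in> W_edges E t Ss - {e}"
    then obtain j where j: "j < t" "u = Inl (j, Inr (b ! j))"
      by (auto elim: W_edges_Inr_neighbour)
    then have "j \<noteq> j0" using u active(3) by (auto simp: insert_commute)
    then show "j0 \<noteq> c u" using index j by simp
  qed
  moreover have "(c(Inr b := j0)) (Inr x) < t" if x: "x \<in> active t Ss" for x
  proof (cases "x = b")
    case True
    then show ?thesis using active(1) by simp
  next
    case False
    then have "c (Inr x) \<noteq> t" using unique x by blast
    moreover have "c (Inr x) \<le> t" using colours x by auto
    ultimately show ?thesis using False by simp
  qed
  ultimately show ?thesis using that by blast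
qed

end

theorem lemma4:
  fixes V :: "'a set" and E :: "'a set set" and k i :: nat
    and Ss :: "nat \<Rightarrow> ('a + 'a) set set"
  assumes "k \<ge> 4"
    and "critical V E (k - 1)"
    and "triangle_free E"
    and "pentagon_free E"
    and "1 \<le> i" and "i \<le> k - 1"
    and "\<forall>j < i - 1. is_Mr V E (k - 1) (k - 1 - j) (Ss j)"
  shows "(\<forall>a \<in> active (i - 1) Ss. \<exists>c.
            proper_col (W_verts V (i - 1) Ss) (W_edges E (i - 1) Ss) (k - 1) c \<and>
            c ` Inr ` active (i - 1) Ss \<subseteq> {..<i} \<and>
            {x \<in> active (i - 1) Ss. c (Inr x) = i - 1} = {a})
       \<and> (\<forall>c. proper_col (W_verts V (i - 1) Ss) (W_edges E (i - 1) Ss) (k - 1) c \<longrightarrow>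
            card (c ` Inr ` active (i - 1) Ss) \<ge> i)
       \<and> (\<forall>e \<in> W_edges E (i - 1) Ss. \<exists>c.
            proper_col (W_verts V (i - 1) Ss) (W_edges E (i - 1) Ss - {e}) (k - 1) c \<and>
            card (c ` Inr ` active (i - 1) Ss) \<le> i - 1)"
proof -
  obtain t where i: "i = Suc t" using assms(5) by (cases i) auto
  interpret W_construction V E "k - 1" t Ss
    by unfold_locales (use assms i in auto)
  show ?thesis
    unfolding i diff_Suc_1 lessThan_Suc_atMost Suc_le_eq
  proof (intro conjI ballI allI impI)
    fix a assume "a \<in> active t Ss"
    then show "\<exists>c. proper_col (W_verts V t Ss) (W_edges E t Ss) (k - 1) c \<and>
        c ` Inr ` active t Ss \<subseteq> {..t} \<and> {x \<in> active t Ss. c (Inr x) = t} = {a}"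
      by (elim W_colouring_marked) blast
  next
    fix c assume "proper_col (W_verts V t Ss) (W_edges E t Ss) (k - 1) c"
    then show "t < card (c ` Inr ` active t Ss)" by (rule W_active_colours_gt)
  next
    fix e assume "e \<in> W_edges E t Ss"
    then obtain c where "proper_col (W_verts V t Ss) (W_edges E t Ss - {e}) (k - 1) c"
      and "c ` Inr ` active t Ss \<subseteq> {..<t}" by (rule W_colouring_minus_edge)
    moreover have "card (c ` Inr ` active t Ss) \<le> t"
      using card_mono[OF finite_lessThan \<open>c ` Inr ` active t Ss \<subseteq> {..<t}\<close>] by simp
    ultimately show "\<exists>c. proper_col (W_verts V t Ss) (W_edges E t Ss - {e}) (k - 1) c \<and>
        card (c ` Inr ` active t Ss) \<le> t" by blast
  qed
qed

end
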